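(* Let $0<b<a<n$ and $0<\alpha<1$ with $\alpha n$ an integer. Let $\mathcal D_1$ be the law of $X_1-Y_1$ where $X_1\sim\mathrm{Binom}(\alpha n, a/n)$ and $Y_1\sim\mathrm{Binom}((1-\alpha)n, b/n)$ are independent, and let $\mathcal D_2$ be the law of $X_2-Y_2$ where $X_2\sim\mathrm{Binom}(\alpha n, b/n)$ and $Y_2\sim\mathrm{Binom}((1-\alpha)n, a/n)$ are independent. Let $C=(\sqrt a-\sqrt b)^2$ and $K=(1-2\alpha)n\,D(a/n,b/n)$. Then for every real $\theta$, \[ \max\Big(\Pr_{x\sim\mathcal D_1}[x+K\le\theta],\ \Pr_{x\sim\mathcal D_2}[x+K\ge-\theta]\Big)\le \exp\!\Big(-\frac C2+\frac\theta2\log R(a/n,b/n)\Big). \]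
   Context: $\mathrm{Binom}(m,p)$ denotes the binomial distribution with $m$ trials and success probability $p$. For $0<p,q<1$: $R(p,q)=\frac{p(1-q)}{q(1-p)}$, and for $p\neq q$, $D(p,q)=\dfrac{\log\frac{1-q}{1-p}}{\log R(p,q)}$. *)

theory Defs
  imports "HOL-Probability.Probability"
begin

definition Rfun :: "real \<Rightarrow> real \<Rightarrow> real" where
  "Rfun p q = (p * (1 - q)) / (q * (1 - p))"

definition Dfun :: "real \<Rightarrow> real \<Rightarrow> real" where
  "Dfun p q = ln ((1 - q) / (1 - p)) / ln (Rfun p q)"

definition binom_diff :: "nat \<Rightarrow> real \<Rightarrow> nat \<Rightarrow> real \<Rightarrow> int pmf" where
  "binom_diff m p k q =
     map_pmf (\<lambda>(x, y). int x - int y) (pair_pmf (binomial_pmf m p) (binomial_pmf k q))"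

end

theory Submission
  imports Defs
begin

text \<open>
  Chernoff's bound, taken at the exponent \<open>t = log R(p, q) / 2\<close> with \<open>p = a/n\<close>, \<open>q = b/n\<close>.
  At this \<open>t\<close> the moment generating factors of the two binomials become \<open>B / \<rho>\<close> and
  \<open>B \<rho>\<close>, where \<open>B\<close> is the Bhattacharyya coefficient of \<open>Bernoulli(p)\<close> and \<open>Bernoulli(q)\<close>
  and \<open>\<rho> = sqrt ((1 - q) / (1 - p))\<close>; the shift \<open>K\<close> is exactly what makes the powers of \<open>\<rho>\<close>
  cancel against \<open>exp (t K)\<close>. What remains is \<open>B^n \<le> exp (-(sqrt a - sqrt b)^2 / 2)\<close>, since
  \<open>B \<le> 1 - (sqrt p - sqrt q)^2 / 2\<close>. Negating \<open>X - Y\<close> turns the second tail into the first.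
\<close>

lemma expectation_pair_pmf_mult:
  fixes f :: "'a \<Rightarrow> real" and g :: "'b \<Rightarrow> real"
  assumes "finite (set_pmf A)" "finite (set_pmf B)"
  shows "measure_pmf.expectation (pair_pmf A B) (\<lambda>(x, y). f x * g y) =
         measure_pmf.expectation A f * measure_pmf.expectation B g"
proof -
  have "measure_pmf.expectation (pair_pmf A B) (\<lambda>(x, y). f x * g y) =
        (\<Sum>(x, y)\<in>set_pmf A \<times> set_pmf B. f x * g y * pmf (pair_pmf A B) (x, y))"
    using assms by (subst integral_measure_pmf_real[where A = "set_pmf A \<times> set_pmf B"])
      (auto simp: case_prod_unfold)
  also have "\<dots> = (\<Sum>x\<in>set_pmf A. f x * pmf A x) * (\<Sum>y\<in>set_pmf B. g y * pmf B y)"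
    by (simp add: sum.cartesian_product[symmetric] sum_product pmf_pair mult_ac)
  also have "\<dots> = measure_pmf.expectation A f * measure_pmf.expectation B g"
    using assms by (simp add: integral_measure_pmf_real[where A = "set_pmf A"]
                              integral_measure_pmf_real[where A = "set_pmf B"])
  finally show ?thesis .
qed

lemma binomial_pmf_mgf:
  assumes "p \<in> {0..1}"
  shows "measure_pmf.expectation (binomial_pmf n p) (\<lambda>k. exp (s * real k)) = (1 - p + p * exp s) ^ n"
proof -
  have "measure_pmf.expectation (binomial_pmf n p) (\<lambda>k. exp (s * real k)) =
        (\<Sum>k\<le>n. real (n choose k) * (p * exp s) ^ k * (1 - p) ^ (n - k))"
    unfolding expectation_binomial_pmf'[OF assms]
    by (intro sum.cong) (simp_all add: exp_of_nat_mult[symmetric] power_mult_distrib mult.commute)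
  also have "\<dots> = (1 - p + p * exp s) ^ n"
    by (simp add: binomial_ring[symmetric] add.commute)
  finally show ?thesis .
qed

lemma binom_diff_lower_tail:
  assumes "p \<in> {0..1}" "q \<in> {0..1}" "t > 0"
  shows "measure_pmf.prob (binom_diff m p k q) {x. real_of_int x \<le> c}
           \<le> exp (t * c) * ((1 - p + p * exp (- t)) ^ m * (1 - q + q * exp t) ^ k)"
proof -
  let ?M = "binom_diff m p k q"
  have fin: "finite (set_pmf (binomial_pmf m p))" "finite (set_pmf (binomial_pmf k q))"
    using assms by auto
  have "measure_pmf.expectation ?M (\<lambda>x. exp (- t * real_of_int x)) =
        measure_pmf.expectation (pair_pmf (binomial_pmf m p) (binomial_pmf k q))
          (\<lambda>(x, y). exp (- t * real x) * exp (t * real y))"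
    unfolding binom_diff_def
    by (simp add: case_prod_unfold exp_add[symmetric] algebra_simps)
  also have "\<dots> = (1 - p + p * exp (- t)) ^ m * (1 - q + q * exp t) ^ k"
    using binomial_pmf_mgf[OF assms(1), of m "- t"] binomial_pmf_mgf[OF assms(2), of k t]
    by (simp add: expectation_pair_pmf_mult[OF fin])
  finally have mgf: "measure_pmf.expectation ?M (\<lambda>x. exp (- t * real_of_int x)) =
      (1 - p + p * exp (- t)) ^ m * (1 - q + q * exp t) ^ k" .
  have "finite (set_pmf ?M)"
    using fin by (simp add: binom_diff_def)
  then have int: "integrable ?M (\<lambda>x. exp (- t * real_of_int x))"
    by (rule integrable_measure_pmf_finite)
  have "measure_pmf.prob ?M {x \<in> space ?M. real_of_int x \<le> c}
        \<le> exp (t * c) * (\<integral>x\<in>space ?M. exp (- t * real_of_int x) \<partial>?M)"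
    using int by (intro measure_pmf.Chernoff_ineq_le \<open>t > 0\<close>) (simp_all add: set_integrable_def)
  then show ?thesis
    unfolding set_integral_space[OF int] mgf by simp
qed

lemma binom_diff_swap: "binom_diff m q k p = map_pmf uminus (binom_diff k p m q)"
  unfolding binom_diff_def
  by (subst pair_commute_pmf) (simp add: map_pmf_comp case_prod_unfold)

lemma Rfun_gt_one:
  assumes "0 < q" "q < p" "p < 1"
  shows "1 < Rfun p q"
proof -
  have "q * (1 - p) < p * (1 - q)" "0 < q * (1 - p)"
    using assms by (simp_all add: algebra_simps)
  then show ?thesis
    unfolding Rfun_def by simp
qed

lemma exp_half_ln: "0 < x \<Longrightarrow> exp (ln x / 2) = sqrt x"
  by (simp add: powr_half_sqrt[symmetric] powr_def)

definition bhattacharyya :: "real \<Rightarrow> real \<Rightarrow> real" where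
  "bhattacharyya p q = sqrt (p * q) + sqrt ((1 - p) * (1 - q))"

lemma bhattacharyya_le_exp:
  assumes "p \<in> {0..1}" "q \<in> {0..1}"
  shows "bhattacharyya p q \<le> exp (- ((sqrt p - sqrt q)\<^sup>2 / 2))"
proof -
  have "(sqrt p - sqrt q)\<^sup>2 + (sqrt (1 - p) - sqrt (1 - q))\<^sup>2 = 2 - 2 * bhattacharyya p q"
    using assms unfolding bhattacharyya_def real_sqrt_mult by (simp add: power2_diff algebra_simps)
  then have "bhattacharyya p q \<le> 1 + (- ((sqrt p - sqrt q)\<^sup>2 / 2))"
    using zero_le_power2[of "sqrt (1 - p) - sqrt (1 - q)"] by linarith
  also have "\<dots> \<le> exp (- ((sqrt p - sqrt q)\<^sup>2 / 2))"
    by (rule exp_ge_add_one_self)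
  finally show ?thesis .
qed

lemma bhattacharyya_scaled_power_le:
  assumes "a \<in> {0..real n}" "b \<in> {0..real n}"
  shows "bhattacharyya (a / n) (b / n) ^ n \<le> exp (- ((sqrt a - sqrt b)\<^sup>2 / 2))"
proof (cases "n = 0")
  case True
  then show ?thesis
    using assms by simp
next
  case False
  then have scale: "real n * (sqrt (a / n) - sqrt (b / n))\<^sup>2 = (sqrt a - sqrt b)\<^sup>2"
    by (simp add: real_sqrt_divide power2_eq_square field_simps)
  have scaled: "a / n \<in> {0..1}" "b / n \<in> {0..1}"
    using assms False by auto
  then have "0 \<le> bhattacharyya (a / n) (b / n)"
    unfolding bhattacharyya_def real_sqrt_mult by simp
  then have "bhattacharyya (a / n) (b / n) ^ n \<le> exp (- ((sqrt (a / n) - sqrt (b / n))\<^sup>2 / 2)) ^ n"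
    using scaled by (intro power_mono bhattacharyya_le_exp)
  also have "\<dots> = exp (- ((sqrt a - sqrt b)\<^sup>2 / 2))"
    by (simp add: exp_of_nat_mult[symmetric] scale)
  finally show ?thesis .
qed

lemma binomial_mgf_half_log_odds:
  assumes "0 < q" "q < p" "p < 1"
  defines "t \<equiv> ln (Rfun p q) / 2"
  shows "(1 - p + p * exp (- t)) ^ m * (1 - q + q * exp t) ^ k =
         bhattacharyya p q ^ (m + k) * exp (t * ((real k - real m) * Dfun p q))"
proof -
  define u v u' v' where roots: "u = sqrt p" "v = sqrt q" "u' = sqrt (1 - p)" "v' = sqrt (1 - q)"
  have pos: "0 < u" "0 < v" "0 < u'" "0 < v'"
    using assms by (simp_all add: roots)
  have sq: "u\<^sup>2 = p" "v\<^sup>2 = q" "u'\<^sup>2 = 1 - p" "v'\<^sup>2 = 1 - q"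
    using assms by (simp_all add: roots)
  define \<rho> where "\<rho> = v' / u'"
  have B: "bhattacharyya p q = u * v + u' * v'"
    by (simp add: bhattacharyya_def real_sqrt_mult roots)
  have R: "Rfun p q > 0" "ln (Rfun p q) \<noteq> 0"
    using Rfun_gt_one[OF assms(1-3)] by simp_all
  have "exp t = sqrt (Rfun p q)"
    using exp_half_ln[OF R(1)] by (simp add: t_def)
  also have "\<dots> = (u * v') / (v * u')"
    by (simp add: Rfun_def real_sqrt_mult real_sqrt_divide roots)
  finally have et: "exp t = (u * v') / (v * u')" .
  have "1 - p + p * exp (- t) = u'\<^sup>2 + u\<^sup>2 * ((v * u') / (u * v'))"
    using sq by (simp add: exp_minus et)
  also have "\<dots> = (u * v + u' * v') / \<rho>"
    using pos by (simp add: \<rho>_def field_simps power2_eq_square)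
  finally have lower: "1 - p + p * exp (- t) = bhattacharyya p q / \<rho>"
    unfolding B .
  have "1 - q + q * exp t = v'\<^sup>2 + v\<^sup>2 * ((u * v') / (v * u'))"
    using sq by (simp add: et)
  also have "\<dots> = (u * v + u' * v') * \<rho>"
    using pos by (simp add: \<rho>_def field_simps power2_eq_square)
  finally have upper: "1 - q + q * exp t = bhattacharyya p q * \<rho>"
    unfolding B .
  have "t * Dfun p q = ln ((1 - q) / (1 - p)) / 2"
    using R by (simp add: t_def Dfun_def)
  then have tD: "exp (t * Dfun p q) = \<rho>"
    using assms by (simp add: exp_half_ln real_sqrt_divide \<rho>_def roots)
  have "t * ((real k - real m) * Dfun p q) = real k * (t * Dfun p q) - real m * (t * Dfun p q)"
    by (simp add: algebra_simps)
  then have "exp (t * ((real k - real m) * Dfun p q)) = \<rho> ^ k / \<rho> ^ m"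
    by (simp only: exp_diff exp_of_nat_mult tD)
  then show ?thesis
    unfolding lower upper using pos
    by (simp add: \<rho>_def power_mult_distrib power_divide power_add field_simps)
qed

lemma binom_diff_lower_tail_half_log_odds:
  assumes "0 < q" "q < p" "p < 1"
  shows "measure_pmf.prob (binom_diff m p k q)
           {x. real_of_int x + (real k - real m) * Dfun p q \<le> \<theta>}
         \<le> exp (ln (Rfun p q) / 2 * \<theta>) * bhattacharyya p q ^ (m + k)"
proof -
  define t where "t = ln (Rfun p q) / 2"
  define K where "K = (real k - real m) * Dfun p q"
  have "0 < t"
    using Rfun_gt_one[OF assms] by (simp add: t_def)
  have "measure_pmf.prob (binom_diff m p k q) {x. real_of_int x + K \<le> \<theta>}
        \<le> exp (t * (\<theta> - K)) * ((1 - p + p * exp (- t)) ^ m * (1 - q + q * exp t) ^ k)"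
    using binom_diff_lower_tail[of p q t m k "\<theta> - K"] assms \<open>0 < t\<close> by (simp add: le_diff_eq)
  also have "\<dots> = exp (t * \<theta>) * bhattacharyya p q ^ (m + k)"
    using binomial_mgf_half_log_odds[OF assms, of m k, folded t_def K_def]
    by (simp add: right_diff_distrib exp_diff)
  finally show ?thesis
    by (simp add: t_def K_def)
qed

lemma binom_diff_upper_tail_half_log_odds:
  assumes "0 < q" "q < p" "p < 1"
  shows "measure_pmf.prob (binom_diff m q k p)
           {x. real_of_int x + (real k - real m) * Dfun p q \<ge> - \<theta>}
         \<le> exp (ln (Rfun p q) / 2 * \<theta>) * bhattacharyya p q ^ (m + k)"
proof -
  have "uminus -` {x. real_of_int x + (real k - real m) * Dfun p q \<ge> - \<theta>} =
        {x :: int. real_of_int x + (real m - real k) * Dfun p q \<le> \<theta>}"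
    by (auto simp: algebra_simps)
  then have "measure_pmf.prob (binom_diff m q k p)
               {x. real_of_int x + (real k - real m) * Dfun p q \<ge> - \<theta>} =
             measure_pmf.prob (binom_diff k p m q)
               {x. real_of_int x + (real m - real k) * Dfun p q \<le> \<theta>}"
    by (simp only: binom_diff_swap[of m q k p] measure_map_pmf)
  also have "\<dots> \<le> exp (ln (Rfun p q) / 2 * \<theta>) * bhattacharyya p q ^ (m + k)"
    using binom_diff_lower_tail_half_log_odds[OF assms, of k m \<theta>] by (simp add: add.commute)
  finally show ?thesis .
qed

theorem mainTheorem5:
  fixes n m :: nat and a b \<alpha> \<theta> :: real
  assumes "0 < b" "b < a" "a < real n"
    and "0 < \<alpha>" "\<alpha> < 1" "\<alpha> * real n = real m"
  shows "max (measure_pmf.prob (binom_diff m (a / n) (n - m) (b / n))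
               {x. real_of_int x + (1 - 2 * \<alpha>) * real n * Dfun (a / n) (b / n) \<le> \<theta>})
             (measure_pmf.prob (binom_diff m (b / n) (n - m) (a / n))
               {x. real_of_int x + (1 - 2 * \<alpha>) * real n * Dfun (a / n) (b / n) \<ge> - \<theta>})
         \<le> exp (- ((sqrt a - sqrt b)^2) / 2 + \<theta> / 2 * ln (Rfun (a / n) (b / n)))"
proof -
  define p q where pq: "p = a / n" "q = b / n"
  have "\<alpha> * real n < 1 * real n"
    using assms by (intro mult_strict_right_mono) auto
  then have "m + (n - m) = n" and K: "(1 - 2 * \<alpha>) * real n = real (n - m) - real m"
    using assms(6) by (simp_all add: algebra_simps of_nat_diff)
  have pq_bounds: "0 < q" "q < p" "p < 1"
    using assms by (simp_all add: pq divide_strict_right_mono)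
  have "exp (ln (Rfun p q) / 2 * \<theta>) * bhattacharyya p q ^ n
        \<le> exp (ln (Rfun p q) / 2 * \<theta>) * exp (- ((sqrt a - sqrt b)\<^sup>2 / 2))"
    using assms unfolding pq by (intro mult_left_mono bhattacharyya_scaled_power_le) auto
  then show ?thesis
    using binom_diff_lower_tail_half_log_odds[OF pq_bounds, of m "n - m" \<theta>]
      binom_diff_upper_tail_half_log_odds[OF pq_bounds, of m "n - m" \<theta>]
    unfolding K \<open>m + (n - m) = n\<close> pq[symmetric] by (simp add: mult.commute flip: exp_add)
qed

end
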